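(* Let $K$ be a connected $2$-dimensional simplicial complex (with or without boundary), and let $f: K\to\mathbb{R}^3$ be a polyhedron. Then the following two statements are equivalent: (i) $f(K)$ is not embedded in $\mathbb{R}^3$, i.e. $f$ is not injective; (ii) there exist two simplices $\sigma_1,\sigma_2\in K$ with $\dim\sigma_1\leqslant 1$, and points $u_1\in\sigma_1$, $u_2\in\sigma_2$, such that $u_1\neq u_2$ and $f(u_1)=f(u_2)$.
   Context: A polyhedron is a continuous map $f: K\to\mathbb{R}^3$ from (the geometric realization of) a connected $2$-dimensional simplicial complex $K$ which is affine linear and nondegenerate (i.e. injective) on every simplex of $K$. The polyhedron is called embedded if $f$ is injective. *)

theory Defs
  imports "HOL-Analysis.Analysis"
begin

definition simplicial_complex :: "'v set set \<Rightarrow> bool" where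
  "simplicial_complex K \<longleftrightarrow>
     (\<forall>\<sigma>\<in>K. finite \<sigma> \<and> \<sigma> \<noteq> {} \<and> (\<forall>\<tau>. \<tau> \<subseteq> \<sigma> \<and> \<tau> \<noteq> {} \<longrightarrow> \<tau> \<in> K))"

text \<open>dimension of a simplex = number of vertices - 1; the complex is 2-dimensional\<close>
definition two_dimensional :: "'v set set \<Rightarrow> bool" where
  "two_dimensional K \<longleftrightarrow> (\<forall>\<sigma>\<in>K. card \<sigma> \<le> 3) \<and> (\<exists>\<sigma>\<in>K. card \<sigma> = 3)"

text \<open>connectedness via the 1-skeleton (equivalent to connectedness of the realization)\<close>
definition complex_connected :: "'v set set \<Rightarrow> bool" where
  "complex_connected K \<longleftrightarrow>
     (\<forall>v w. v \<in> \<Union>K \<and> w \<in> \<Union>K \<longrightarrow> (\<lambda>a b. {a, b} \<in> K)\<^sup>*\<^sup>* v w)"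

text \<open>Geometric realization: points are barycentric coordinate functions.\<close>
definition gsimplex :: "'v set \<Rightarrow> ('v \<Rightarrow> real) set" where
  "gsimplex \<sigma> = {x. (\<forall>v. 0 \<le> x v) \<and> (\<forall>v. v \<notin> \<sigma> \<longrightarrow> x v = 0) \<and> (\<Sum>v\<in>\<sigma>. x v) = 1}"

definition realization :: "'v set set \<Rightarrow> ('v \<Rightarrow> real) set" where
  "realization K = (\<Union>\<sigma>\<in>K. gsimplex \<sigma>)"

definition vertex_pt :: "'v \<Rightarrow> ('v \<Rightarrow> real)" where
  "vertex_pt v = (\<lambda>w. if w = v then 1 else 0)"

definition polyhedron :: "'v set set \<Rightarrow> (('v \<Rightarrow> real) \<Rightarrow> real^3) \<Rightarrow> bool" where
  "polyhedron K f \<longleftrightarrow>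
     continuous_on (realization K) f \<and>
     (\<forall>\<sigma>\<in>K. \<forall>x\<in>gsimplex \<sigma>. f x = (\<Sum>v\<in>\<sigma>. x v *\<^sub>R f (vertex_pt v))) \<and>
     (\<forall>\<sigma>\<in>K. inj_on f (gsimplex \<sigma>))"

end

theory Submission
  imports Defs
begin

(* Let x and y be distinct points of two triangles \<sigma> and \<tau> with f x = f y. The pairs (d1, d2) of
   barycentric directions tangent to \<sigma> and \<tau> form a 4-dimensional space which f maps linearly
   into R^3, so some nonzero pair has the same image under f. Along the line
   t \<mapsto> (x + t d1, y + t d2) the two images stay equal; following it in both directions until one of
   the points reaches the boundary of its triangle yields two collisions in which one point lies on
   an edge. They cannot both be trivial: the difference of the two points is affine in t and nonzero
   at t = 0, so it cannot vanish at both ends of a parameter interval containing 0. *)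

lemma linear_nontrivial_kernel:
  fixes L :: "'a::euclidean_space \<Rightarrow> 'b::euclidean_space"
  assumes "linear L" and "DIM('b) < DIM('a)"
  shows "\<exists>w\<noteq>0. L w = 0"
proof (rule ccontr)
  assume "\<not> ?thesis"
  then have "inj L"
    using linear_injective_0[OF \<open>linear L\<close>] by blast
  then have "dim (L ` UNIV) = DIM('a)"
    using dim_image_eq[OF \<open>linear L\<close>, of UNIV] by (simp add: dim_UNIV)
  moreover have "dim (L ` UNIV) \<le> DIM('b)"
    using dim_subset_UNIV by blast
  ultimately show False
    using \<open>DIM('b) < DIM('a)\<close> by simp
qed

lemma first_zero_of_affine_family:
  fixes p q :: "'i \<Rightarrow> real"
  assumes "finite I" and nonneg: "\<forall>i\<in>I. 0 \<le> p i" and "\<exists>i\<in>I. q i < 0"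
  shows "\<exists>t\<ge>0. (\<forall>i\<in>I. 0 \<le> p i + t * q i) \<and> (\<exists>i\<in>I. p i + t * q i = 0)"
proof -
  define T where "T = (\<lambda>i. p i / - q i) ` {i\<in>I. q i < 0}"
  define t where "t = Min T"
  have "finite T" "T \<noteq> {}"
    using assms unfolding T_def by auto
  then have "t \<in> T" and t_le: "\<And>s. s \<in> T \<Longrightarrow> t \<le> s"
    unfolding t_def by simp_all
  then obtain j where j: "j \<in> I" "q j < 0" "t = p j / - q j"
    unfolding T_def by blast
  have "0 \<le> t"
    using j nonneg by (simp add: divide_nonneg_neg)
  moreover have "0 \<le> p i + t * q i" if "i \<in> I" for i
  proof (cases "q i < 0")
    case True
    then have "t \<le> p i / - q i"
      using t_le that unfolding T_def by blast
    then have "t * - q i \<le> p i"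
      using True by (subst (asm) pos_le_divide_eq) auto
    then show ?thesis
      by simp
  next
    case False
    then show ?thesis
      using \<open>0 \<le> t\<close> nonneg that by simp
  qed
  moreover have "p j + t * q j = 0"
    using j by simp
  ultimately show ?thesis
    using j(1) by blast
qed

definition tangent_dir :: "'v set \<Rightarrow> ('v \<Rightarrow> real) \<Rightarrow> bool" where
  "tangent_dir \<sigma> d \<longleftrightarrow> (\<forall>v. v \<notin> \<sigma> \<longrightarrow> d v = 0) \<and> sum d \<sigma> = 0"

lemma tangent_dir_uminus: "tangent_dir \<sigma> d \<Longrightarrow> tangent_dir \<sigma> (\<lambda>v. - d v)"
  by (simp add: tangent_dir_def sum_negf)

lemma tangent_dir_negative_coordinate:
  assumes "finite \<sigma>" and d: "tangent_dir \<sigma> d" and "d \<noteq> (\<lambda>_. 0)"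
  shows "\<exists>v\<in>\<sigma>. d v < 0"
proof (rule ccontr)
  assume "\<not> ?thesis"
  then have "\<forall>v\<in>\<sigma>. 0 \<le> d v"
    by (simp add: not_less)
  then have "\<forall>v\<in>\<sigma>. d v = 0"
    using sum_nonneg_eq_0_iff[OF \<open>finite \<sigma>\<close>] d unfolding tangent_dir_def by blast
  then have "d = (\<lambda>_. 0)"
    using d unfolding tangent_dir_def by (metis ext)
  with \<open>d \<noteq> (\<lambda>_. 0)\<close> show False ..
qed

lemma gsimplex_add_tangent_dir:
  assumes "x \<in> gsimplex \<sigma>" and "tangent_dir \<sigma> d" and "\<forall>v\<in>\<sigma>. 0 \<le> x v + t * d v"
  shows "(\<lambda>v. x v + t * d v) \<in> gsimplex \<sigma>"
proof -
  have "(\<Sum>v\<in>\<sigma>. x v + t * d v) = (\<Sum>v\<in>\<sigma>. x v) + t * sum d \<sigma>"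
    by (simp add: sum.distrib sum_distrib_left)
  then show ?thesis
    using assms unfolding gsimplex_def tangent_dir_def by auto
qed

lemma simplicial_complex_finite: "simplicial_complex K \<Longrightarrow> \<sigma> \<in> K \<Longrightarrow> finite \<sigma>"
  unfolding simplicial_complex_def by blast

lemma simplicial_complex_face:
  "simplicial_complex K \<Longrightarrow> \<sigma> \<in> K \<Longrightarrow> \<tau> \<subseteq> \<sigma> \<Longrightarrow> \<tau> \<noteq> {} \<Longrightarrow> \<tau> \<in> K"
  unfolding simplicial_complex_def by blast

lemma gsimplex_facet:
  assumes x: "x \<in> gsimplex \<sigma>" and "v \<in> \<sigma>" and "x v = 0"
  shows "x \<in> gsimplex (\<sigma> - {v})"
proof -
  have "finite \<sigma>"
    using x sum.infinite unfolding gsimplex_def by fastforce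
  then have "(\<Sum>w\<in>\<sigma> - {v}. x w) = (\<Sum>w\<in>\<sigma>. x w)"
    using \<open>v \<in> \<sigma>\<close> \<open>x v = 0\<close> by (simp add: sum.remove)
  moreover have "\<forall>w. w \<notin> \<sigma> - {v} \<longrightarrow> x w = 0"
    using x \<open>x v = 0\<close> unfolding gsimplex_def by blast
  ultimately show ?thesis
    using x unfolding gsimplex_def by simp
qed

lemma polyhedron_along_tangent_dir:
  assumes "polyhedron K f" and "\<sigma> \<in> K"
    and "x \<in> gsimplex \<sigma>" and "(\<lambda>v. x v + t * d v) \<in> gsimplex \<sigma>"
  shows "f (\<lambda>v. x v + t * d v) = f x + t *\<^sub>R (\<Sum>v\<in>\<sigma>. d v *\<^sub>R f (vertex_pt v))"
proof -
  have affine: "f z = (\<Sum>v\<in>\<sigma>. z v *\<^sub>R f (vertex_pt v))" if "z \<in> gsimplex \<sigma>" for z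
    using assms(1,2) that unfolding polyhedron_def by blast
  show ?thesis
    using affine[OF assms(3)] affine[OF assms(4)]
    by (simp add: scaleR_add_left sum.distrib scaleR_sum_right)
qed

lemma triangle_tangent_dir:
  fixes F :: "'v \<Rightarrow> 'a::real_vector" and \<alpha> \<beta> :: real
  assumes "a \<noteq> b" "a \<noteq> c" "b \<noteq> c"
    and d_def: "d = (\<lambda>v. \<alpha> * (vertex_pt b v - vertex_pt a v) + \<beta> * (vertex_pt c v - vertex_pt a v))"
  shows "tangent_dir {a, b, c} d"
    and "(\<Sum>v\<in>{a, b, c}. d v *\<^sub>R F v) = \<alpha> *\<^sub>R (F b - F a) + \<beta> *\<^sub>R (F c - F a)"
    and "d = (\<lambda>_. 0) \<Longrightarrow> \<alpha> = 0 \<and> \<beta> = 0"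
proof -
  have d: "d a = - \<alpha> - \<beta>" "d b = \<alpha>" "d c = \<beta>"
    using assms(1-3) by (simp_all add: d_def vertex_pt_def)
  show "tangent_dir {a, b, c} d"
    using assms(1-3) unfolding tangent_dir_def by (simp add: d_def vertex_pt_def)
  show "(\<Sum>v\<in>{a, b, c}. d v *\<^sub>R F v) = \<alpha> *\<^sub>R (F b - F a) + \<beta> *\<^sub>R (F c - F a)"
  proof -
    have "(\<Sum>v\<in>{a, b, c}. d v *\<^sub>R F v) = d a *\<^sub>R F a + d b *\<^sub>R F b + d c *\<^sub>R F c"
      using assms(1-3) by (simp add: algebra_simps)
    then show ?thesis
      unfolding d by (simp add: algebra_simps)
  qed
  show "d = (\<lambda>_. 0) \<Longrightarrow> \<alpha> = 0 \<and> \<beta> = 0"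
    using d by simp
qed

lemma triangles_common_tangent_dir:
  fixes F :: "'v \<Rightarrow> 'a::euclidean_space"
  assumes "DIM('a) \<le> 3" and "card \<sigma> = 3" and "card \<tau> = 3"
  obtains d1 d2 where "tangent_dir \<sigma> d1" "tangent_dir \<tau> d2"
    "d1 \<noteq> (\<lambda>_. 0) \<or> d2 \<noteq> (\<lambda>_. 0)"
    "(\<Sum>v\<in>\<sigma>. d1 v *\<^sub>R F v) = (\<Sum>v\<in>\<tau>. d2 v *\<^sub>R F v)"
proof -
  obtain a b c where \<sigma>: "\<sigma> = {a, b, c}" "a \<noteq> b" "a \<noteq> c" "b \<noteq> c"
    using \<open>card \<sigma> = 3\<close> by (auto simp: card_3_iff)
  obtain p q r where \<tau>: "\<tau> = {p, q, r}" "p \<noteq> q" "p \<noteq> r" "q \<noteq> r"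
    using \<open>card \<tau> = 3\<close> by (auto simp: card_3_iff)
  define L :: "(real \<times> real) \<times> (real \<times> real) \<Rightarrow> 'a" where
    "L = (\<lambda>((\<alpha>, \<beta>), (\<gamma>, \<delta>)). \<alpha> *\<^sub>R (F b - F a) + \<beta> *\<^sub>R (F c - F a)
                              - (\<gamma> *\<^sub>R (F q - F p) + \<delta> *\<^sub>R (F r - F p)))"
  have "linear L"
    unfolding L_def by (auto simp: linear_iff algebra_simps split: prod.splits)
  then obtain \<alpha> \<beta> \<gamma> \<delta> where "((\<alpha>, \<beta>), (\<gamma>, \<delta>)) \<noteq> 0" and "L ((\<alpha>, \<beta>), (\<gamma>, \<delta>)) = 0"
    using linear_nontrivial_kernel[of L] \<open>DIM('a) \<le> 3\<close> by force
  then have nonzero: "(\<alpha>, \<beta>) \<noteq> (0, 0) \<or> (\<gamma>, \<delta>) \<noteq> (0, 0)"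
    and kernel: "\<alpha> *\<^sub>R (F b - F a) + \<beta> *\<^sub>R (F c - F a) = \<gamma> *\<^sub>R (F q - F p) + \<delta> *\<^sub>R (F r - F p)"
    by (auto simp: L_def zero_prod_def)
  define d1 where "d1 = (\<lambda>v. \<alpha> * (vertex_pt b v - vertex_pt a v) + \<beta> * (vertex_pt c v - vertex_pt a v))"
  define d2 where "d2 = (\<lambda>v. \<gamma> * (vertex_pt q v - vertex_pt p v) + \<delta> * (vertex_pt r v - vertex_pt p v))"
  note d1 = triangle_tangent_dir[OF \<sigma>(2-4) d1_def, folded \<sigma>(1)]
  note d2 = triangle_tangent_dir[OF \<tau>(2-4) d2_def, folded \<tau>(1)]
  show ?thesis
  proof (rule that)
    show "tangent_dir \<sigma> d1" "tangent_dir \<tau> d2"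
      by (fact d1(1), fact d2(1))
    show "d1 \<noteq> (\<lambda>_. 0) \<or> d2 \<noteq> (\<lambda>_. 0)"
      using nonzero d1(3) d2(3) by auto
    show "(\<Sum>v\<in>\<sigma>. d1 v *\<^sub>R F v) = (\<Sum>v\<in>\<tau>. d2 v *\<^sub>R F v)"
      unfolding d1(2)[of F] d2(2)[of F] by (fact kernel)
  qed
qed

lemma common_ray_reaches_boundary:
  assumes "finite \<sigma>" and "finite \<tau>"
    and x: "x \<in> gsimplex \<sigma>" and y: "y \<in> gsimplex \<tau>"
    and d1: "tangent_dir \<sigma> d1" and d2: "tangent_dir \<tau> d2"
    and nonzero: "d1 \<noteq> (\<lambda>_. 0) \<or> d2 \<noteq> (\<lambda>_. 0)"
  obtains t where "0 \<le> t"
    "(\<lambda>v. x v + t * d1 v) \<in> gsimplex \<sigma>" "(\<lambda>v. y v + t * d2 v) \<in> gsimplex \<tau>"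
    "(\<exists>v\<in>\<sigma>. x v + t * d1 v = 0) \<or> (\<exists>v\<in>\<tau>. y v + t * d2 v = 0)"
proof -
  have "\<forall>i\<in>\<sigma> <+> \<tau>. 0 \<le> case_sum x y i"
    using x y unfolding gsimplex_def by auto
  moreover have "\<exists>i\<in>\<sigma> <+> \<tau>. case_sum d1 d2 i < 0"
    using nonzero tangent_dir_negative_coordinate[OF \<open>finite \<sigma>\<close> d1]
      tangent_dir_negative_coordinate[OF \<open>finite \<tau>\<close> d2] by (metis InlI InrI sum.case)
  ultimately obtain t where "0 \<le> t"
    and nonneg: "\<forall>i\<in>\<sigma> <+> \<tau>. 0 \<le> case_sum x y i + t * case_sum d1 d2 i"
    and zero: "\<exists>i\<in>\<sigma> <+> \<tau>. case_sum x y i + t * case_sum d1 d2 i = 0"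
    using first_zero_of_affine_family[OF finite_Plus[OF \<open>finite \<sigma>\<close> \<open>finite \<tau>\<close>]] by blast
  show ?thesis
  proof (rule that)
    show "0 \<le> t"
      by fact
    show "(\<lambda>v. x v + t * d1 v) \<in> gsimplex \<sigma>"
      by (rule gsimplex_add_tangent_dir[OF x d1]) (use nonneg InlI in force)
    show "(\<lambda>v. y v + t * d2 v) \<in> gsimplex \<tau>"
      by (rule gsimplex_add_tangent_dir[OF y d2]) (use nonneg InrI in force)
    show "(\<exists>v\<in>\<sigma>. x v + t * d1 v = 0) \<or> (\<exists>v\<in>\<tau>. y v + t * d2 v = 0)"
      using zero by auto
  qed
qed

lemma polyhedron_collision_along_tangent_dirs:
  assumes f: "polyhedron K f" and "\<sigma> \<in> K" "\<tau> \<in> K"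
    and x: "x \<in> gsimplex \<sigma>" and y: "y \<in> gsimplex \<tau>" and "f x = f y"
    and x': "(\<lambda>v. x v + t * d1 v) \<in> gsimplex \<sigma>" and y': "(\<lambda>v. y v + t * d2 v) \<in> gsimplex \<tau>"
    and "(\<Sum>v\<in>\<sigma>. d1 v *\<^sub>R f (vertex_pt v)) = (\<Sum>v\<in>\<tau>. d2 v *\<^sub>R f (vertex_pt v))"
  shows "f (\<lambda>v. x v + t * d1 v) = f (\<lambda>v. y v + t * d2 v)"
  using polyhedron_along_tangent_dir[OF f \<open>\<sigma> \<in> K\<close> x x'] polyhedron_along_tangent_dir[OF f \<open>\<tau> \<in> K\<close> y y']
    assms(6,9) by simp

lemma lines_not_meeting_at_both_ends:
  fixes x y d1 d2 :: "'v \<Rightarrow> real"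
  assumes "x \<noteq> y" and "0 \<le> t" and "0 \<le> s"
  shows "(\<lambda>v. x v + t * d1 v) \<noteq> (\<lambda>v. y v + t * d2 v) \<or>
    (\<lambda>v. x v + s * - d1 v) \<noteq> (\<lambda>v. y v + s * - d2 v)"
proof (rule ccontr)
  assume "\<not> ?thesis"
  then have "x v + t * d1 v = y v + t * d2 v" "x v + s * - d1 v = y v + s * - d2 v" for v
    by (simp_all add: fun_eq_iff)
  then have at_t: "x v - y v = t * (d2 v - d1 v)" and at_s: "x v - y v = s * (d1 v - d2 v)" for v
    unfolding right_diff_distrib by (simp_all add: algebra_simps)
  have "x v = y v" for v
  proof -
    have "(t + s) * (d2 v - d1 v) = 0"
      using at_t[of v] at_s[of v] by (simp add: algebra_simps)
    then have "t = 0 \<or> d1 v = d2 v"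
      using \<open>0 \<le> t\<close> \<open>0 \<le> s\<close> by auto
    then show ?thesis
      using at_t[of v] by auto
  qed
  with \<open>x \<noteq> y\<close> show False
    by blast
qed

lemma polyhedron_collision_slides_to_boundary:
  assumes f: "polyhedron K f" and "\<sigma> \<in> K" "\<tau> \<in> K" "finite \<sigma>" "finite \<tau>"
    and x: "x \<in> gsimplex \<sigma>" and y: "y \<in> gsimplex \<tau>" and "x \<noteq> y" and "f x = f y"
    and d1: "tangent_dir \<sigma> d1" and d2: "tangent_dir \<tau> d2"
    and nonzero: "d1 \<noteq> (\<lambda>_. 0) \<or> d2 \<noteq> (\<lambda>_. 0)"
    and same_image: "(\<Sum>v\<in>\<sigma>. d1 v *\<^sub>R f (vertex_pt v)) = (\<Sum>v\<in>\<tau>. d2 v *\<^sub>R f (vertex_pt v))"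
  obtains x' y' where "x' \<in> gsimplex \<sigma>" "y' \<in> gsimplex \<tau>" "x' \<noteq> y'" "f x' = f y'"
    "(\<exists>v\<in>\<sigma>. x' v = 0) \<or> (\<exists>v\<in>\<tau>. y' v = 0)"
proof -
  note collision = polyhedron_collision_along_tangent_dirs[OF f \<open>\<sigma> \<in> K\<close> \<open>\<tau> \<in> K\<close> x y \<open>f x = f y\<close>]
  obtain t where "0 \<le> t" and t: "(\<lambda>v. x v + t * d1 v) \<in> gsimplex \<sigma>" "(\<lambda>v. y v + t * d2 v) \<in> gsimplex \<tau>"
    "(\<exists>v\<in>\<sigma>. x v + t * d1 v = 0) \<or> (\<exists>v\<in>\<tau>. y v + t * d2 v = 0)"
    using common_ray_reaches_boundary[OF \<open>finite \<sigma>\<close> \<open>finite \<tau>\<close> x y d1 d2 nonzero] .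
  have "(\<lambda>v. - d1 v) \<noteq> (\<lambda>_. 0) \<or> (\<lambda>v. - d2 v) \<noteq> (\<lambda>_. 0)"
    using nonzero by (auto simp: fun_eq_iff)
  then obtain s where "0 \<le> s" and s: "(\<lambda>v. x v + s * - d1 v) \<in> gsimplex \<sigma>" "(\<lambda>v. y v + s * - d2 v) \<in> gsimplex \<tau>"
    "(\<exists>v\<in>\<sigma>. x v + s * - d1 v = 0) \<or> (\<exists>v\<in>\<tau>. y v + s * - d2 v = 0)"
    by (rule common_ray_reaches_boundary[OF \<open>finite \<sigma>\<close> \<open>finite \<tau>\<close> x y
          tangent_dir_uminus[OF d1] tangent_dir_uminus[OF d2]])
  have neg_same_image: "(\<Sum>v\<in>\<sigma>. - d1 v *\<^sub>R f (vertex_pt v)) = (\<Sum>v\<in>\<tau>. - d2 v *\<^sub>R f (vertex_pt v))"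
    using same_image by (simp add: sum_negf)
  consider (forward) "(\<lambda>v. x v + t * d1 v) \<noteq> (\<lambda>v. y v + t * d2 v)"
    | (backward) "(\<lambda>v. x v + s * - d1 v) \<noteq> (\<lambda>v. y v + s * - d2 v)"
    using lines_not_meeting_at_both_ends[OF \<open>x \<noteq> y\<close> \<open>0 \<le> t\<close> \<open>0 \<le> s\<close>] by blast
  then show ?thesis
  proof cases
    case forward
    show ?thesis
      by (rule that[OF t(1,2) forward collision[OF t(1,2) same_image] t(3)])
  next
    case backward
    show ?thesis
      by (rule that[OF s(1,2) backward collision[OF s(1,2) neg_same_image] s(3)])
  qed
qed

lemma simplicial_complex_zero_coordinate_facet:
  assumes "simplicial_complex K" and "\<sigma> \<in> K"
    and x: "x \<in> gsimplex \<sigma>" and "v \<in> \<sigma>" and "x v = 0"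
  obtains \<sigma>' where "\<sigma>' \<in> K" "card \<sigma>' < card \<sigma>" "x \<in> gsimplex \<sigma>'"
proof (rule that[of "\<sigma> - {v}"])
  show x': "x \<in> gsimplex (\<sigma> - {v})"
    using gsimplex_facet[OF x \<open>v \<in> \<sigma>\<close> \<open>x v = 0\<close>] .
  then have "(\<Sum>w\<in>\<sigma> - {v}. x w) = 1"
    unfolding gsimplex_def by simp
  then have "\<sigma> - {v} \<noteq> {}"
    by force
  then show "\<sigma> - {v} \<in> K"
    by (rule simplicial_complex_face[OF assms(1,2) Diff_subset])
  show "card (\<sigma> - {v}) < card \<sigma>"
    using simplicial_complex_finite[OF assms(1,2)] \<open>v \<in> \<sigma>\<close> by (rule card_Diff1_less)
qed

lemma polyhedron_triangle_collision_edge_collision: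
  assumes K: "simplicial_complex K" and f: "polyhedron K f"
    and "\<sigma> \<in> K" "\<tau> \<in> K" "card \<sigma> = 3" "card \<tau> = 3"
    and "x \<in> gsimplex \<sigma>" "y \<in> gsimplex \<tau>" "x \<noteq> y" "f x = f y"
  shows "\<exists>\<sigma>1\<in>K. \<exists>\<sigma>2\<in>K. card \<sigma>1 \<le> 2 \<and>
    (\<exists>u1\<in>gsimplex \<sigma>1. \<exists>u2\<in>gsimplex \<sigma>2. u1 \<noteq> u2 \<and> f u1 = f u2)"
proof -
  have "finite \<sigma>" "finite \<tau>"
    using \<open>card \<sigma> = 3\<close> \<open>card \<tau> = 3\<close> by (simp_all add: card_ge_0_finite)
  have "DIM(real^3) \<le> 3"
    by simp
  then obtain d1 d2 where d: "tangent_dir \<sigma> d1" "tangent_dir \<tau> d2" "d1 \<noteq> (\<lambda>_. 0) \<or> d2 \<noteq> (\<lambda>_. 0)"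
    "(\<Sum>v\<in>\<sigma>. d1 v *\<^sub>R f (vertex_pt v)) = (\<Sum>v\<in>\<tau>. d2 v *\<^sub>R f (vertex_pt v))"
    by (rule triangles_common_tangent_dir[OF _ \<open>card \<sigma> = 3\<close> \<open>card \<tau> = 3\<close>])
  obtain x' y' where x': "x' \<in> gsimplex \<sigma>" and y': "y' \<in> gsimplex \<tau>"
    and collision: "x' \<noteq> y'" "f x' = f y'" and "(\<exists>v\<in>\<sigma>. x' v = 0) \<or> (\<exists>v\<in>\<tau>. y' v = 0)"
    by (rule polyhedron_collision_slides_to_boundary[OF f \<open>\<sigma> \<in> K\<close> \<open>\<tau> \<in> K\<close> \<open>finite \<sigma>\<close> \<open>finite \<tau>\<close>
          assms(7-10) d])
  then show ?thesis
  proof (elim disjE bexE)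
    fix v assume "v \<in> \<sigma>" "x' v = 0"
    then obtain \<sigma>' where "\<sigma>' \<in> K" "card \<sigma>' < card \<sigma>" "x' \<in> gsimplex \<sigma>'"
      by (rule simplicial_complex_zero_coordinate_facet[OF K \<open>\<sigma> \<in> K\<close> x'])
    moreover have "card \<sigma>' \<le> 2"
      using \<open>card \<sigma>' < card \<sigma>\<close> \<open>card \<sigma> = 3\<close> by simp
    ultimately show ?thesis
      using \<open>\<tau> \<in> K\<close> y' collision by blast
  next
    fix v assume "v \<in> \<tau>" "y' v = 0"
    then obtain \<tau>' where "\<tau>' \<in> K" "card \<tau>' < card \<tau>" "y' \<in> gsimplex \<tau>'"
      by (rule simplicial_complex_zero_coordinate_facet[OF K \<open>\<tau> \<in> K\<close> y'])
    moreover have "card \<tau>' \<le> 2"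
      using \<open>card \<tau>' < card \<tau>\<close> \<open>card \<tau> = 3\<close> by simp
    ultimately show ?thesis
      using \<open>\<sigma> \<in> K\<close> x' collision[symmetric] by blast
  qed
qed

theorem lemma1:
  fixes K :: "'v set set" and f :: "('v \<Rightarrow> real) \<Rightarrow> real^3"
  assumes "simplicial_complex K" and "finite K"
    and "two_dimensional K" and "complex_connected K"
    and "polyhedron K f"
  shows "\<not> inj_on f (realization K) \<longleftrightarrow>
    (\<exists>\<sigma>1\<in>K. \<exists>\<sigma>2\<in>K. card \<sigma>1 \<le> 2 \<and>
       (\<exists>u1\<in>gsimplex \<sigma>1. \<exists>u2\<in>gsimplex \<sigma>2. u1 \<noteq> u2 \<and> f u1 = f u2))"
    (is "?L \<longleftrightarrow> ?R")
proof
  assume ?R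
  then show ?L
    unfolding realization_def inj_on_def by blast
next
  assume ?L
  then obtain \<sigma> \<tau> x y where collision: "\<sigma> \<in> K" "\<tau> \<in> K" "x \<in> gsimplex \<sigma>" "y \<in> gsimplex \<tau>"
    "x \<noteq> y" "f x = f y"
    unfolding realization_def inj_on_def by blast
  have "card \<sigma> \<le> 3" "card \<tau> \<le> 3"
    using \<open>two_dimensional K\<close> collision(1,2) unfolding two_dimensional_def by blast+
  then consider "card \<sigma> \<le> 2" | "card \<tau> \<le> 2" | "card \<sigma> = 3" "card \<tau> = 3"
    by linarith
  then show ?R
  proof cases
    case 1
    with collision show ?R by blast
  next
    case 2
    with collision(1-4) collision(5,6)[symmetric] show ?R by blast
  next
    case 3
    from \<open>simplicial_complex K\<close> \<open>polyhedron K f\<close> collision(1,2) 3 collision(3-6) show ?R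
      by (fact polyhedron_triangle_collision_edge_collision)
  qed
qed

end
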